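(* Let $d\ge1$ be a feasible integer. Let $V$ be a standard $U_q(\widehat{\mathfrak{sl}}_2)$-module of diameter $1$ and $W$ a standard $U_q(\widehat{\mathfrak{sl}}_2)$-module of diameter $d-1$, so that $V\otimes W$ is standard of diameter $d$. Writing $\sigma_n(X)$ for the $n$-th term of the normalized split sequence of a module $X$, we have $\sigma_0(V\otimes W)=1$, $$\sigma_n(V\otimes W)=(q^{d-n}-q^{n-d})(bb^*q^{n-d}-cc^*q^{d-n})\,\sigma_{n-1}(W)+\sigma_n(W)+\sigma_1(V)\,\sigma_{n-1}(W)\qquad(1\le n\le d-1),$$ and $\sigma_d(V\otimes W)=\sigma_1(V)\,\sigma_{d-1}(W)$.
   Context: Let $\mathbb F$ be an algebraically closed field and fix nonzero $q\in\mathbb F$ with $q^2\ne1$; write $[n]_q=(q^n-q^{-n})/(q-q^{-1})$. $U_q(\widehat{\mathfrak{sl}}_2)$ is the associative unital $\mathbb F$-algebra with generators $e_i^{\pm},K_i^{\pm1}$ ($i\in\{0,1\}$) and relations $K_iK_i^{-1}=K_i^{-1}K_i=1$, $K_0K_1=K_1K_0$, $K_ie_i^{\pm}K_i^{-1}=q^{\pm2}e_i^{\pm}$, $K_ie_j^{\pm}K_i^{-1}=q^{\mp2}e_j^{\pm}$ ($i\ne j$), $e_i^+e_i^--e_i^-e_i^+=(K_i-K_i^{-1})/(q-q^{-1})$, $e_0^{\pm}e_1^{\mp}=e_1^{\mp}e_0^{\pm}$, and $(e_i^\pm)^3e_j^\pm-[3]_q(e_i^\pm)^2e_j^\pm e_i^\pm+[3]_qe_i^\pm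 e_j^\pm(e_i^\pm)^2-e_j^\pm(e_i^\pm)^3=0$ ($i\ne j$). Tensor products of modules are formed via $e_i^+(v\otimes w)=e_i^+v\otimes K_iw+v\otimes e_i^+w$, $e_i^-(v\otimes w)=e_i^-v\otimes w+K_i^{-1}v\otimes e_i^-w$, $K_i(v\otimes w)=K_iv\otimes K_iw$. For nonzero $\alpha\in\mathbb F$, $V(\alpha)$ is the module with basis $x,y$ and $K_1x=qx$, $K_1y=q^{-1}y$, $e_1^-x=y$, $e_1^-y=0$, $e_1^+x=0$, $e_1^+y=x$, $K_0x=q^{-1}x$, $K_0y=qy$, $e_0^-x=0$, $e_0^-y=q\alpha^{-1}x$, $e_0^+x=q^{-1}\alpha y$, $e_0^+y=0$. A standard module of diameter $d$ is $V(\alpha_1)\otimes\cdots\otimes V(\alpha_d)$ with all $\alpha_i\in\mathbb F$ nonzero (for $d=0$: the trivial module, on which each $e_i^\pm$ acts as $0$ and each $K_i^{\pm1}$ as $1$). An integer $d$ is feasible if $d\ge0$ and $q^{2i}\ne1$ for $1\le i\le d$. For a standard $V$ of diameter $d$, $U_0$ is the $1$-dimensional span of $x\otimes\cdots\otimes x$. Fix nonzero $b,c,b^*,c^*\in\mathbb F$ and $u,v,u^*,v^*\in\mathbb F$ with $uv^*=-bb^*q^{-1}(q-q^{-1})^2$ and $vu^*=-cc^*q^{-1}(q-q^{-1})^2$; set $R=ue_0^++ve_1^-K_1$ and $L=u^*e_1^++v^*e_0^-K_0$. For a standard module $V$ of feasible diameter $d$ and $0\le i\le d$, $\zeta_i$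 is the scalar by which $L^iR^i$ acts on $U_0$ (the split sequence), and the normalized split sequence is $\sigma_i=\zeta_i/\prod_{k=1}^i(q^k-q^{-k})^2$ (so $\sigma_0=1$). *)

theory Defs
  imports "HOL-Computational_Algebra.Polynomial"
begin

datatype gen = E0p | E0m | E1p | E1m | K0 | K1 | K0i | K1i

text \<open>Basis of a standard module V(a_1) (x) ... (x) V(a_n): words of length n over bool,
  True = x, False = y.  An operator is represented by its matrix M, where M w u is the
  coefficient of basis word w in the image of basis word u.\<close>

type_synonym 'a mat = "bool list \<Rightarrow> bool list \<Rightarrow> 'a"

definition words :: "nat \<Rightarrow> bool list set" where
  "words n = {w. length w = n}"

definition idm :: "'a::zero_neq_one mat" where
  "idm w u = (if w = u then 1 else 0)"

definition mmul :: "nat \<Rightarrow> 'a::comm_ring_1 mat \<Rightarrow> 'a mat \<Rightarrow> 'a mat" where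
  "mmul n M N = (\<lambda>w u. \<Sum>v\<in>words n. M w v * N v u)"

definition madd :: "'a::comm_ring_1 mat \<Rightarrow> 'a mat \<Rightarrow> 'a mat" where
  "madd M N = (\<lambda>w u. M w u + N w u)"

definition msmult :: "'a::comm_ring_1 \<Rightarrow> 'a mat \<Rightarrow> 'a mat" where
  "msmult c M = (\<lambda>w u. c * M w u)"

fun mpow :: "nat \<Rightarrow> 'a::comm_ring_1 mat \<Rightarrow> nat \<Rightarrow> 'a mat" where
  "mpow n M 0 = idm"
| "mpow n M (Suc k) = mmul n M (mpow n M k)"

fun tens :: "(bool \<Rightarrow> bool \<Rightarrow> 'a::comm_ring_1) \<Rightarrow> 'a mat \<Rightarrow> 'a mat" where
  "tens A M (b # w) (c # u) = A b c * M w u"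
| "tens A M _ _ = 0"

definition id2 :: "bool \<Rightarrow> bool \<Rightarrow> 'a::zero_neq_one" where
  "id2 b c = (if b = c then 1 else 0)"

text \<open>Action of the generators on V(alpha); x = True, y = False; A b c = coefficient of b in
  the image of c.\<close>
definition single :: "'a::field \<Rightarrow> 'a \<Rightarrow> gen \<Rightarrow> bool \<Rightarrow> bool \<Rightarrow> 'a" where
  "single q \<alpha> g b c = (case g of
      K1 \<Rightarrow> (if b = c then (if c then q else inverse q) else 0)
    | K1i \<Rightarrow> (if b = c then (if c then inverse q else q) else 0)
    | K0 \<Rightarrow> (if b = c then (if c then inverse q else q) else 0)
    | K0i \<Rightarrow> (if b = c then (if c then q else inverse q) else 0)
    | E1m \<Rightarrow> (if c \<and> \<not> b then 1 else 0)
    | E1p \<Rightarrow> (if \<not> c \<and> b then 1 else 0)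
    | E0m \<Rightarrow> (if \<not> c \<and> b then q * inverse \<alpha> else 0)
    | E0p \<Rightarrow> (if c \<and> \<not> b then inverse q * \<alpha> else 0))"

text \<open>Action of the generators on the standard module V(a_1) (x) (V(a_2) (x) ( ... )),
  built with the given coproduct; for the empty list this is the trivial module.\<close>
fun gmat :: "'a::field \<Rightarrow> 'a list \<Rightarrow> gen \<Rightarrow> 'a mat" where
  "gmat q [] g = (\<lambda>w u. if w = [] \<and> u = [] then
       (case g of K0 \<Rightarrow> 1 | K1 \<Rightarrow> 1 | K0i \<Rightarrow> 1 | K1i \<Rightarrow> 1 | _ \<Rightarrow> 0) else 0)"
| "gmat q (\<alpha> # \<alpha>s) g = (case g of
      E0p \<Rightarrow> madd (tens (single q \<alpha> E0p) (gmat q \<alpha>s K0)) (tens id2 (gmat q \<alpha>s E0p))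
    | E1p \<Rightarrow> madd (tens (single q \<alpha> E1p) (gmat q \<alpha>s K1)) (tens id2 (gmat q \<alpha>s E1p))
    | E0m \<Rightarrow> madd (tens (single q \<alpha> E0m) idm) (tens (single q \<alpha> K0i) (gmat q \<alpha>s E0m))
    | E1m \<Rightarrow> madd (tens (single q \<alpha> E1m) idm) (tens (single q \<alpha> K1i) (gmat q \<alpha>s E1m))
    | _ \<Rightarrow> tens (single q \<alpha> g) (gmat q \<alpha>s g))"

definition Rop :: "'a::field \<Rightarrow> 'a \<Rightarrow> 'a \<Rightarrow> 'a list \<Rightarrow> 'a mat" where
  "Rop q u v as = madd (msmult u (gmat q as E0p))
      (msmult v (mmul (length as) (gmat q as E1m) (gmat q as K1)))"

definition Lop :: "'a::field \<Rightarrow> 'a \<Rightarrow> 'a \<Rightarrow> 'a list \<Rightarrow> 'a mat" where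
  "Lop q us vs as = madd (msmult us (gmat q as E1p))
      (msmult vs (mmul (length as) (gmat q as E0m) (gmat q as K0)))"

text \<open>Split sequence: the scalar by which L^i R^i acts on U_0 = span of x (x) ... (x) x.\<close>
definition split_seq :: "'a::field \<Rightarrow> 'a \<Rightarrow> 'a \<Rightarrow> 'a \<Rightarrow> 'a \<Rightarrow> 'a list \<Rightarrow> nat \<Rightarrow> 'a" where
  "split_seq q u v us vs as i = (THE z. \<forall>w\<in>words (length as).
      mmul (length as) (mpow (length as) (Lop q us vs as) i) (mpow (length as) (Rop q u v as) i)
        w (replicate (length as) True)
      = (if w = replicate (length as) True then z else 0))"

definition norm_split_seq :: "'a::field \<Rightarrow> 'a \<Rightarrow> 'a \<Rightarrow> 'a \<Rightarrow> 'a \<Rightarrow> 'a list \<Rightarrow> nat \<Rightarrow> 'a" where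
  "norm_split_seq q u v us vs as i =
     split_seq q u v us vs as i / (\<Prod>k=1..i. (q ^ k - inverse q ^ k) ^ 2)"

definition feasible :: "'a::field \<Rightarrow> nat \<Rightarrow> bool" where
  "feasible q d \<longleftrightarrow> (\<forall>i\<in>{1..d}. q ^ (2 * i) \<noteq> 1)"

end

theory Submission
  imports Defs
begin

(* We first compute the
   actions of R = u e_0^+ + v e_1^- K_1 and L = u* e_1^+ + v* e_0^- K_0 on
   vectors explicitly by recursion on the first tensor factor (Rvec, Lvec):
   R turns one x into y and L one y into x, with scalar coefficients that
   depend only on the number of x's in the remaining word.  Hence the split
   sequence equals split_val, the top coordinate of L^i R^i applied to
   x (x) ... (x) x.  Splitting off the first factor V(alpha), R^i and then
   L^i decompose (Rvec_iter_Cons, Lvec_iter_Cons), which yields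
     zeta_i(V(alpha) (x) W) = zeta_i(W) + S_i T_i zeta_{i-1}(W)
   with explicit sums S_i, T_i (split_val_Cons).  These are geometric sums;
   evaluating them and using the constraints on u v* and v u* gives the
   normalized recursion (coefficient_identity, norm_split_seq_Cons), from
   which the theorem follows together with sigma_0 = 1 and sigma_d(W) = 0. *)

lemma finite_words: "finite (words n)"
proof -
  have "words n = {xs. set xs \<subseteq> UNIV \<and> length xs = n}" unfolding words_def by auto
  then show ?thesis using finite_lists_length_eq[of "UNIV::bool set" n] by simp
qed

lemma words_Suc: "words (Suc n) = Cons True ` words n \<union> Cons False ` words n"
  unfolding words_def
proof (auto, goal_cases)
  case (1 x)
  then show ?case by (cases x) (auto simp: image_iff)
qed

lemma sum_words_Suc:
  "(\<Sum>v\<in>words (Suc n). g v) = (\<Sum>w\<in>words n. g (True#w)) + (\<Sum>w\<in>words n. g (False#w))"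
proof -
  have "(\<Sum>v\<in>words (Suc n). g v) = (\<Sum>v\<in>Cons True ` words n. g v) + (\<Sum>v\<in>Cons False ` words n. g v)"
    unfolding words_Suc by (rule sum.union_disjoint) (auto simp: finite_words)
  also have "\<dots> = (\<Sum>w\<in>words n. g (True#w)) + (\<Sum>w\<in>words n. g (False#w))"
    by (simp add: sum.reindex)
  finally show ?thesis .
qed

lemma words_Cons[simp]: "(b # w \<in> words (Suc n)) = (w \<in> words n)"
  by (simp add: words_def)

lemma words_0: "words 0 = {[]}" by (auto simp: words_def)

text \<open>The number of x's (letters True) in a word; it determines the weight of
  a basis vector, on which the K_i act diagonally.\<close>

fun xcount :: "bool list \<Rightarrow> nat" where
  "xcount [] = 0" | "xcount (b # w) = (if b then Suc (xcount w) else xcount w)"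

lemma xcount_le: "xcount w \<le> length w"
  by (induction w) auto

lemma xcount_full: "length w = n \<Longrightarrow> xcount w = n \<Longrightarrow> w = replicate n True"
proof (induction w arbitrary: n)
  case Nil then show ?case by simp
next
  case (Cons b w)
  then show ?case using xcount_le[of w] by (cases b) auto
qed

lemma xcount_replicate: "xcount (replicate n True) = n"
  by (induction n) auto

definition act :: "nat \<Rightarrow> 'a::comm_ring_1 mat \<Rightarrow> (bool list \<Rightarrow> 'a) \<Rightarrow> bool list \<Rightarrow> 'a" where
  "act n M f w = (\<Sum>v\<in>words n. M w v * f v)"

lemma act_cong: "(\<And>v. v \<in> words n \<Longrightarrow> f v = g v) \<Longrightarrow> act n M f w = act n M g w"
  unfolding act_def by (rule sum.cong) auto

lemma act_madd: "act n (madd M N) f w = act n M f w + act n N f w"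
  unfolding act_def madd_def by (simp add: sum.distrib distrib_right)

lemma act_msmult: "act n (msmult c M) f w = c * act n M f w"
  unfolding act_def msmult_def by (simp add: sum_distrib_left mult.assoc)

lemma act_mmul: "act n (mmul n M N) f w = act n M (act n N f) w"
  unfolding act_def mmul_def
  by (simp add: sum_distrib_left sum_distrib_right mult.assoc) (rule sum.swap)

lemma act_idm: assumes "w \<in> words n" shows "act n idm f w = f w"
proof -
  have "act n idm f w = (\<Sum>v\<in>words n. if w = v then f v else 0)"
    unfolding act_def by (rule sum.cong) (auto simp: idm_def)
  then show ?thesis using assms by (simp add: finite_words)
qed

lemma act_scale: "act n M (\<lambda>v. c * f v) w = c * act n M f w"
  unfolding act_def by (simp add: sum_distrib_left algebra_simps)

lemma act_add: "act n M (\<lambda>v. f v + g v) w = act n M f w + act n M g w"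
  unfolding act_def by (simp add: sum.distrib algebra_simps)

lemma act_tens: "act (Suc m) (tens A M) f (b#w) =
   A b True * act m M (\<lambda>w'. f (True#w')) w + A b False * act m M (\<lambda>w'. f (False#w')) w"
  unfolding act_def sum_words_Suc by (simp add: sum_distrib_left mult.assoc)

text \<open>Eigenvalue of K_1 on a basis word of length n with c letters x.\<close>

definition kdiag :: "'a::field \<Rightarrow> nat \<Rightarrow> nat \<Rightarrow> 'a" where
  "kdiag q n c = q ^ c * inverse q ^ (n - c)"

lemma gmat_K1: "gmat q as K1 w u = (if w = u \<and> length w = length as then kdiag q (length as) (xcount w) else 0)"
proof (induction as arbitrary: w u)
  case Nil
  then show ?case by (auto simp: kdiag_def)
next
  case (Cons \<alpha> as)
  show ?case
  proof (cases w; cases u)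
    fix b w' c u' assume w: "w = b # w'" and u: "u = c # u'"
    have le: "xcount w' \<le> length as" if "length w' = length as" using xcount_le that by metis
    show ?thesis using w u Cons le
      by (auto simp: single_def kdiag_def Suc_diff_le)
  qed auto
qed

lemma gmat_K0: "gmat q as K0 w u = (if w = u \<and> length w = length as then kdiag (inverse q) (length as) (xcount w) else 0)"
proof (induction as arbitrary: w u)
  case Nil
  then show ?case by (auto simp: kdiag_def)
next
  case (Cons \<alpha> as)
  show ?case
  proof (cases w; cases u)
    fix b w' c u' assume w: "w = b # w'" and u: "u = c # u'"
    have le: "xcount w' \<le> length as" if "length w' = length as" using xcount_le that by metis
    show ?thesis using w u Cons le
      by (auto simp: single_def kdiag_def Suc_diff_le)
  qed auto
qed

lemma act_K1: assumes "w \<in> words (length as)"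
  shows "act (length as) (gmat q as K1) f w = kdiag q (length as) (xcount w) * f w"
proof -
  have "act (length as) (gmat q as K1) f w = (\<Sum>v\<in>words (length as). if v = w then kdiag q (length as) (xcount w) * f w else 0)"
    unfolding act_def gmat_K1 by (rule sum.cong) (auto simp: words_def)
  then show ?thesis using assms by (simp add: finite_words)
qed

lemma act_K0: assumes "w \<in> words (length as)"
  shows "act (length as) (gmat q as K0) f w = kdiag (inverse q) (length as) (xcount w) * f w"
proof -
  have "act (length as) (gmat q as K0) f w = (\<Sum>v\<in>words (length as). if v = w then kdiag (inverse q) (length as) (xcount w) * f w else 0)"
    unfolding act_def gmat_K0 by (rule sum.cong) (auto simp: words_def)
  then show ?thesis using assms by (simp add: finite_words)
qed

lemma act_K1_Cons: "act (Suc (length as)) (gmat q (\<alpha> # as) K1) f (b # w) =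
   (if b then q else inverse q) * act (length as) (gmat q as K1) (\<lambda>w'. f (b # w')) w"
  by (simp add: act_tens single_def)

lemma act_K0_Cons: "act (Suc (length as)) (gmat q (\<alpha> # as) K0) f (b # w) =
   (if b then inverse q else q) * act (length as) (gmat q as K0) (\<lambda>w'. f (b # w')) w"
  by (simp add: act_tens single_def)

text \<open>The scalar by which R (resp. L) maps x (x) w to y (x) w (resp. y (x) w to
  x (x) w) in V(alpha) (x) W, for a basis word w of length m with c letters x.\<close>

definition Rcoef :: "'a::field \<Rightarrow> 'a \<Rightarrow> 'a \<Rightarrow> 'a \<Rightarrow> nat \<Rightarrow> nat \<Rightarrow> 'a" where
  "Rcoef q u v \<alpha> m c = u * inverse q * \<alpha> * kdiag (inverse q) m c + v * q * kdiag q m c"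

definition Lcoef :: "'a::field \<Rightarrow> 'a \<Rightarrow> 'a \<Rightarrow> 'a \<Rightarrow> nat \<Rightarrow> nat \<Rightarrow> 'a" where
  "Lcoef q us vs \<alpha> m c = us * kdiag q m c + vs * q * q * inverse \<alpha> * kdiag (inverse q) m c"

fun Rvec :: "'a::field \<Rightarrow> 'a \<Rightarrow> 'a \<Rightarrow> 'a list \<Rightarrow> (bool list \<Rightarrow> 'a) \<Rightarrow> bool list \<Rightarrow> 'a" where
  "Rvec q u v [] f w = 0"
| "Rvec q u v (\<alpha> # as) f [] = 0"
| "Rvec q u v (\<alpha> # as) f (b # w) = (if b then Rvec q u v as (\<lambda>w'. f (True # w')) w
     else Rvec q u v as (\<lambda>w'. f (False # w')) w
       + Rcoef q u v \<alpha> (length as) (xcount w) * f (True # w))"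

fun Lvec :: "'a::field \<Rightarrow> 'a \<Rightarrow> 'a \<Rightarrow> 'a list \<Rightarrow> (bool list \<Rightarrow> 'a) \<Rightarrow> bool list \<Rightarrow> 'a" where
  "Lvec q us vs [] f w = 0"
| "Lvec q us vs (\<alpha> # as) f [] = 0"
| "Lvec q us vs (\<alpha> # as) f (b # w) = (if b then Lvec q us vs as (\<lambda>w'. f (True # w')) w
       + Lcoef q us vs \<alpha> (length as) (xcount w) * f (False # w)
     else Lvec q us vs as (\<lambda>w'. f (False # w')) w)"

text \<open>Rvec and Lvec are the actions of the matrices of R and L: by the coproduct,
  on a first letter x the operators pass to W, while R sends x (x) w to y (x) w
  and L sends y (x) w to x (x) w with the scalars Rcoef and Lcoef.\<close>

lemma act_Rop:
  assumes hq: "q \<noteq> 0"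
  shows "w \<in> words (length as) \<Longrightarrow> act (length as) (Rop q u v as) f w = Rvec q u v as f w"
proof (induction as arbitrary: f w)
  case Nil
  then show ?case by (simp add: Rop_def act_def madd_def msmult_def mmul_def words_0)
next
  case (Cons \<alpha> as)
  obtain b w' where w: "w = b # w'" using Cons.prems by (cases w) (auto simp: words_def)
  have w': "w' \<in> words (length as)" using Cons.prems w by simp
  show ?case
  proof (cases b)
    case True
    have "act (length (\<alpha> # as)) (Rop q u v (\<alpha> # as)) f w = act (length as) (Rop q u v as) (\<lambda>w'. f (True # w')) w'"
      using w True hq by (simp add: Rop_def act_madd act_msmult act_mmul act_tens single_def id2_def act_K1_Cons act_scale)
    then show ?thesis using Cons.IH[OF w'] w True by simp
  next
    case False
    have "act (length (\<alpha> # as)) (Rop q u v (\<alpha> # as)) f w = act (length as) (Rop q u v as) (\<lambda>w'. f (False # w')) w'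
       + Rcoef q u v \<alpha> (length as) (xcount w') * f (True # w')"
      using w False hq w' by (simp add: Rop_def act_madd act_msmult act_mmul act_tens single_def id2_def act_K1_Cons act_scale act_idm act_K1 act_K0 Rcoef_def algebra_simps)
    then show ?thesis using Cons.IH[OF w'] w False by simp
  qed
qed

lemma act_Lop:
  assumes hq: "q \<noteq> 0"
  shows "w \<in> words (length as) \<Longrightarrow> act (length as) (Lop q us vs as) f w = Lvec q us vs as f w"
proof (induction as arbitrary: f w)
  case Nil
  then show ?case by (simp add: Lop_def act_def madd_def msmult_def mmul_def words_0)
next
  case (Cons \<alpha> as)
  obtain b w' where w: "w = b # w'" using Cons.prems by (cases w) (auto simp: words_def)
  have w': "w' \<in> words (length as)" using Cons.prems w by simp
  show ?case
  proof (cases b)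
    case True
    have "act (length (\<alpha> # as)) (Lop q us vs (\<alpha> # as)) f w = act (length as) (Lop q us vs as) (\<lambda>w'. f (True # w')) w'
       + Lcoef q us vs \<alpha> (length as) (xcount w') * f (False # w')"
      using w True hq w' by (simp add: Lop_def act_madd act_msmult act_mmul act_tens single_def id2_def act_K0_Cons act_scale act_idm act_K1 act_K0 Lcoef_def algebra_simps)
    then show ?thesis using Cons.IH[OF w'] w True by simp
  next
    case False
    have "act (length (\<alpha> # as)) (Lop q us vs (\<alpha> # as)) f w = act (length as) (Lop q us vs as) (\<lambda>w'. f (False # w')) w'"
      using w False hq w' by (simp add: Lop_def act_madd act_msmult act_mmul act_tens single_def id2_def act_K0_Cons act_scale)
    then show ?thesis using Cons.IH[OF w'] w False by simp
  qed
qed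

lemma Rvec_cong: assumes hq: "q \<noteq> 0" and fg: "\<And>v. v \<in> words (length as) \<Longrightarrow> f v = g v" and w: "w \<in> words (length as)"
  shows "Rvec q u v as f w = Rvec q u v as g w"
proof -
  have "Rvec q u v as f w = act (length as) (Rop q u v as) f w" using act_Rop[OF hq w] by simp
  also have "\<dots> = act (length as) (Rop q u v as) g w" by (rule act_cong) (use fg in auto)
  also have "\<dots> = Rvec q u v as g w" using act_Rop[OF hq w] by simp
  finally show ?thesis .
qed

lemma Lvec_cong: assumes hq: "q \<noteq> 0" and fg: "\<And>v. v \<in> words (length as) \<Longrightarrow> f v = g v" and w: "w \<in> words (length as)"
  shows "Lvec q us vs as f w = Lvec q us vs as g w"
proof -
  have "Lvec q us vs as f w = act (length as) (Lop q us vs as) f w" using act_Lop[OF hq w] by simp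
  also have "\<dots> = act (length as) (Lop q us vs as) g w" by (rule act_cong) (use fg in auto)
  also have "\<dots> = Lvec q us vs as g w" using act_Lop[OF hq w] by simp
  finally show ?thesis .
qed

lemma Rvec_scale: assumes hq: "q \<noteq> 0" and w: "w \<in> words (length as)"
  shows "Rvec q u v as (\<lambda>v. c * f v) w = c * Rvec q u v as f w"
proof -
  have "Rvec q u v as (\<lambda>v. c * f v) w = act (length as) (Rop q u v as) (\<lambda>v. c * f v) w" using act_Rop[OF hq w] by simp
  also have "\<dots> = c * act (length as) (Rop q u v as) f w" by (rule act_scale)
  also have "\<dots> = c * Rvec q u v as f w" using act_Rop[OF hq w] by simp
  finally show ?thesis .
qed

lemma Lvec_scale: assumes hq: "q \<noteq> 0" and w: "w \<in> words (length as)"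
  shows "Lvec q us vs as (\<lambda>v. c * f v) w = c * Lvec q us vs as f w"
proof -
  have "Lvec q us vs as (\<lambda>v. c * f v) w = act (length as) (Lop q us vs as) (\<lambda>v. c * f v) w" using act_Lop[OF hq w] by simp
  also have "\<dots> = c * act (length as) (Lop q us vs as) f w" by (rule act_scale)
  also have "\<dots> = c * Lvec q us vs as f w" using act_Lop[OF hq w] by simp
  finally show ?thesis .
qed

lemma Lvec_add: assumes hq: "q \<noteq> 0" and w: "w \<in> words (length as)"
  shows "Lvec q us vs as (\<lambda>v. f v + g v) w = Lvec q us vs as f w + Lvec q us vs as g w"
proof -
  have "Lvec q us vs as (\<lambda>v. f v + g v) w = act (length as) (Lop q us vs as) (\<lambda>v. f v + g v) w" using act_Lop[OF hq w] by simp
  also have "\<dots> = act (length as) (Lop q us vs as) f w + act (length as) (Lop q us vs as) g w" by (rule act_add)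
  also have "\<dots> = Lvec q us vs as f w + Lvec q us vs as g w" using act_Lop[OF hq w, where f=f] act_Lop[OF hq w, where f=g] by simp
  finally show ?thesis .
qed

lemma Lvec_iter_cong: assumes hq: "q \<noteq> 0" and fg: "\<And>v. v \<in> words (length as) \<Longrightarrow> f v = g v"
  shows "w \<in> words (length as) \<Longrightarrow> (Lvec q us vs as ^^ i) f w = (Lvec q us vs as ^^ i) g w"
proof (induction i arbitrary: w)
  case 0 then show ?case using fg by simp
next
  case (Suc i)
  have "(Lvec q us vs as ^^ Suc i) f w = Lvec q us vs as ((Lvec q us vs as ^^ i) f) w" by simp
  also have "\<dots> = Lvec q us vs as ((Lvec q us vs as ^^ i) g) w"
    by (rule Lvec_cong[OF hq _ Suc.prems]) (rule Suc.IH)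
  also have "\<dots> = (Lvec q us vs as ^^ Suc i) g w" by simp
  finally show ?case .
qed

text \<open>R lowers and L raises the number of y's by one: if the input vector is
  supported on words whose x-count satisfies P, the output is supported on words
  whose x-count after undoing the step satisfies P.\<close>

lemma Rvec_support:
  "(\<And>w. w \<in> words (length as) \<Longrightarrow> f w \<noteq> 0 \<Longrightarrow> P (xcount w)) \<Longrightarrow> w \<in> words (length as)
   \<Longrightarrow> Rvec q u v as f w \<noteq> 0 \<Longrightarrow> P (Suc (xcount w))"
proof (induction as arbitrary: f w P)
  case Nil then show ?case by simp
next
  case (Cons \<alpha> as)
  obtain b w' where w: "w = b # w'" using Cons.prems by (cases w) (auto simp: words_def)
  have w': "w' \<in> words (length as)" using Cons.prems w by simp
  show ?case
  proof (cases b)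
    case True
    have h: "P (Suc (xcount w''))" if "w'' \<in> words (length as)" "f (True # w'') \<noteq> 0" for w''
      using Cons.prems(1)[of "True # w''"] that by simp
    have "P (Suc (Suc (xcount w')))"
      using Cons.IH[of "\<lambda>w'. f (True # w')" "\<lambda>c. P (Suc c)" w', OF h] Cons.prems w True w' by auto
    then show ?thesis using w True by simp
  next
    case False
    show ?thesis
    proof (cases "Rvec q u v as (\<lambda>w'. f (False # w')) w' = 0")
      case True
      then have "f (True # w') \<noteq> 0" using Cons.prems w False by auto
      then show ?thesis using Cons.prems(1)[of "True # w'"] w' w False by simp
    next
      case nz: False
      have h: "P (xcount w'')" if "w'' \<in> words (length as)" "f (False # w'') \<noteq> 0" for w''
        using Cons.prems(1)[of "False # w''"] that by simp
      show ?thesis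
        using Cons.IH[of "\<lambda>w'. f (False # w')" P w', OF h] Cons.prems w False w' nz by auto
    qed
  qed
qed

lemma Lvec_support:
  "(\<And>w. w \<in> words (length as) \<Longrightarrow> f w \<noteq> 0 \<Longrightarrow> P (xcount w)) \<Longrightarrow> w \<in> words (length as)
   \<Longrightarrow> Lvec q us vs as f w \<noteq> 0 \<Longrightarrow> xcount w \<noteq> 0 \<and> P (xcount w - 1)"
proof (induction as arbitrary: f w P)
  case Nil then show ?case by simp
next
  case (Cons \<alpha> as)
  obtain b w' where w: "w = b # w'" using Cons.prems by (cases w) (auto simp: words_def)
  have w': "w' \<in> words (length as)" using Cons.prems w by simp
  show ?case
  proof (cases b)
    case False
    have h: "P (xcount w'')" if "w'' \<in> words (length as)" "f (False # w'') \<noteq> 0" for w''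
      using Cons.prems(1)[of "False # w''"] that by simp
    show ?thesis
      using Cons.IH[of "\<lambda>w'. f (False # w')" P w', OF h] Cons.prems w False w' by auto
  next
    case True
    show ?thesis
    proof (cases "Lvec q us vs as (\<lambda>w'. f (True # w')) w' = 0")
      case z: True
      then have "f (False # w') \<noteq> 0" using Cons.prems w True by auto
      then show ?thesis using Cons.prems(1)[of "False # w'"] w' w True by simp
    next
      case nz: False
      have h: "P (Suc (xcount w''))" if "w'' \<in> words (length as)" "f (True # w'') \<noteq> 0" for w''
        using Cons.prems(1)[of "True # w''"] that by simp
      have "xcount w' \<noteq> 0 \<and> P (Suc (xcount w' - 1))"
        using Cons.IH[of "\<lambda>w'. f (True # w')" "\<lambda>c. P (Suc c)" w', OF h] Cons.prems w True w' nz by auto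
      then have c: "xcount w' \<noteq> 0" and p: "P (Suc (xcount w' - 1))" by auto
      have "Suc (xcount w' - 1) = xcount w'" using c by simp
      then show ?thesis using p w True by simp
    qed
  qed
qed

lemma Rvec_iter_support:
  "(\<And>w. w \<in> words (length as) \<Longrightarrow> f w \<noteq> 0 \<Longrightarrow> P (xcount w)) \<Longrightarrow> w \<in> words (length as)
   \<Longrightarrow> (Rvec q u v as ^^ i) f w \<noteq> 0 \<Longrightarrow> P (xcount w + i)"
proof (induction i arbitrary: w P)
  case 0 then show ?case by simp
next
  case (Suc i)
  have "(\<lambda>c. P (c + i)) (Suc (xcount w))"
    by (rule Rvec_support[where f = "(Rvec q u v as ^^ i) f"]) (use Suc in auto)
  then show ?case by simp
qed

lemma Lvec_iter_support:
  "(\<And>w. w \<in> words (length as) \<Longrightarrow> f w \<noteq> 0 \<Longrightarrow> P (xcount w)) \<Longrightarrow> w \<in> words (length as)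
   \<Longrightarrow> (Lvec q us vs as ^^ i) f w \<noteq> 0 \<Longrightarrow> i \<le> xcount w \<and> P (xcount w - i)"
proof (induction i arbitrary: w P)
  case 0 then show ?case by simp
next
  case (Suc i)
  have "xcount w \<noteq> 0 \<and> (\<lambda>c. i \<le> c \<and> P (c - i)) (xcount w - 1)"
    by (rule Lvec_support[where f = "(Lvec q us vs as ^^ i) f"]) (use Suc in auto)
  then show ?case by auto
qed

lemma mpow_column: "(\<lambda>w. mpow n M i w x) = (act n M ^^ i) (\<lambda>w. idm w x)"
proof (induction i)
  case 0 then show ?case by simp
next
  case (Suc i)
  have "(\<lambda>w. mpow n M (Suc i) w x) = act n M (\<lambda>w. mpow n M i w x)"
    by (auto simp: mmul_def act_def fun_eq_iff)
  then show ?case using Suc by simp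
qed

lemma mmul_column: "mmul n A B w x = act n A (\<lambda>v. B v x) w"
  by (simp add: mmul_def act_def)

lemma act_mpow: "w \<in> words n \<Longrightarrow> act n (mpow n M i) g w = (act n M ^^ i) g w"
proof (induction i arbitrary: w)
  case 0 then show ?case by (simp add: act_idm)
next
  case (Suc i)
  then show ?case by (auto simp: act_mmul intro!: act_cong)
qed

lemma act_iter_agree:
  assumes "\<And>h w. w \<in> words n \<Longrightarrow> act n M h w = Op h w"
    and "\<And>w. w \<in> words n \<Longrightarrow> f w = g w"
  shows "w \<in> words n \<Longrightarrow> (act n M ^^ i) f w = (Op ^^ i) g w"
proof (induction i arbitrary: w)
  case 0 then show ?case using assms(2) by simp
next
  case (Suc i)
  have "(act n M ^^ Suc i) f w = act n M ((act n M ^^ i) f) w" by simp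
  also have "\<dots> = act n M ((Op ^^ i) g) w" by (rule act_cong) (use Suc in auto)
  also have "\<dots> = (Op ^^ Suc i) g w" using assms(1) Suc by simp
  finally show ?case .
qed

definition top_vec :: "nat \<Rightarrow> bool list \<Rightarrow> 'a::field" where
  "top_vec n = (\<lambda>v. if v = replicate n True then 1 else 0)"

lemma top_vec_support: "w \<in> words n \<Longrightarrow> top_vec n w \<noteq> 0 \<Longrightarrow> xcount w = n"
  by (auto simp: top_vec_def xcount_replicate split: if_splits)

lemma Rvec_iter_top_support:
  assumes "w \<in> words (length as)" and "(Rvec q u v as ^^ i) (top_vec (length as)) w \<noteq> 0"
  shows "xcount w + i = length as"
  using Rvec_iter_support[where P = "\<lambda>c. c = length as", OF top_vec_support assms] .

lemma Lvec_iter_const_support: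
  assumes "\<And>w. w \<in> words (length as) \<Longrightarrow> z w \<noteq> 0 \<Longrightarrow> xcount w = k"
    and "w \<in> words (length as)" and "(Lvec q us vs as ^^ j) z w \<noteq> 0"
  shows "xcount w = k + j"
  using Lvec_iter_support[where P = "\<lambda>c. c = k", OF assms] by linarith

lemma LR_iter_top_support:
  assumes w: "w \<in> words (length as)"
    and nz: "(Lvec q us vs as ^^ i) ((Rvec q u v as ^^ i) (top_vec (length as))) w \<noteq> 0"
  shows "w = replicate (length as) True"
proof -
  have "xcount w = (length as - i) + i"
    by (rule Lvec_iter_const_support[OF _ w nz]) (use Rvec_iter_top_support in force)
  then have "xcount w = length as" using xcount_le[of w] w by (simp add: words_def)
  then show ?thesis using xcount_full[of w "length as"] w by (simp add: words_def)
qed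

lemma LR_matrix_column:
  assumes hq: "q \<noteq> 0" and w: "w \<in> words (length as)"
  shows "mmul (length as) (mpow (length as) (Lop q us vs as) i) (mpow (length as) (Rop q u v as) i)
      w (replicate (length as) True)
    = (Lvec q us vs as ^^ i) ((Rvec q u v as ^^ i) (top_vec (length as))) w"
proof -
  define n where "n = length as"
  define x0 where "x0 = replicate n True"
  have col: "(\<lambda>w. idm w x0) = (top_vec n :: bool list \<Rightarrow> 'a)"
    by (auto simp: idm_def top_vec_def x0_def)
  have agR: "(act n (Rop q u v as) ^^ i) (top_vec n) w' = (Rvec q u v as ^^ i) (top_vec n) w'"
    if "w' \<in> words n" for w'
    by (rule act_iter_agree[OF _ _ that]) (use act_Rop[OF hq] in \<open>auto simp: n_def\<close>)
  have "mmul n (mpow n (Lop q us vs as) i) (mpow n (Rop q u v as) i) w x0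
      = act n (mpow n (Lop q us vs as) i) (\<lambda>y. mpow n (Rop q u v as) i y x0) w"
    by (rule mmul_column)
  also have "\<dots> = (act n (Lop q us vs as) ^^ i) ((act n (Rop q u v as) ^^ i) (top_vec n)) w"
    using act_mpow[of w n] w mpow_column[of n "Rop q u v as" i x0] col by (metis n_def)
  also have "\<dots> = (Lvec q us vs as ^^ i) ((Rvec q u v as ^^ i) (top_vec n)) w"
    by (rule act_iter_agree) (use act_Lop[OF hq] agR w in \<open>auto simp: n_def\<close>)
  finally show ?thesis by (simp add: n_def x0_def)
qed

definition split_val :: "'a::field \<Rightarrow> 'a \<Rightarrow> 'a \<Rightarrow> 'a \<Rightarrow> 'a \<Rightarrow> 'a list \<Rightarrow> nat \<Rightarrow> 'a" where
  "split_val q u v us vs as i = (Lvec q us vs as ^^ i) ((Rvec q u v as ^^ i) (top_vec (length as))) (replicate (length as) True)"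

text \<open>Since L^i R^i preserves U_0, the split sequence is the top coordinate split_val.\<close>

lemma split_seq_eq_split_val:
  assumes hq: "q \<noteq> 0"
  shows "split_seq q u v us vs as i = split_val q u v us vs as i"
  unfolding split_seq_def
proof (rule the_equality)
  show "\<forall>w\<in>words (length as). mmul (length as) (mpow (length as) (Lop q us vs as) i)
      (mpow (length as) (Rop q u v as) i) w (replicate (length as) True)
    = (if w = replicate (length as) True then split_val q u v us vs as i else 0)"
    using LR_matrix_column[OF hq] LR_iter_top_support by (fastforce simp: split_val_def)
next
  fix z
  assume "\<forall>w\<in>words (length as). mmul (length as) (mpow (length as) (Lop q us vs as) i)
      (mpow (length as) (Rop q u v as) i) w (replicate (length as) True)
    = (if w = replicate (length as) True then z else 0)"
  moreover have "replicate (length as) True \<in> words (length as)" by (simp add: words_def)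
  ultimately show "z = split_val q u v us vs as i"
    using LR_matrix_column[OF hq] by (force simp: split_val_def)
qed

lemma split_val_0: "split_val q u v us vs as 0 = 1"
  by (simp add: split_val_def top_vec_def)

lemma split_val_beyond_diameter: assumes "length as < i" shows "split_val q u v us vs as i = 0"
proof (rule ccontr)
  assume nz: "split_val q u v us vs as i \<noteq> 0"
  have "i \<le> xcount (replicate (length as) True) \<and> (\<lambda>c. True) (xcount (replicate (length as) True) - i)"
    by (rule Lvec_iter_support[where as = as]) (use nz in \<open>auto simp: split_val_def words_def\<close>)
  then show False using assms by (simp add: xcount_replicate)
qed

lemma norm_split_seq_eq_split_val: "q \<noteq> 0 \<Longrightarrow> norm_split_seq q u v us vs as i =
   split_val q u v us vs as i / (\<Prod>k=1..i. (q ^ k - inverse q ^ k) ^ 2)"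
  by (simp add: norm_split_seq_def split_seq_eq_split_val)

lemma norm_split_seq_0:
  assumes "q \<noteq> 0" shows "norm_split_seq q u v us vs as 0 = 1"
  using norm_split_seq_eq_split_val[OF assms, where i=0] by (simp add: split_val_0)

lemma norm_split_seq_beyond_diameter:
  assumes "q \<noteq> 0" and "length as < i" shows "norm_split_seq q u v us vs as i = 0"
  using norm_split_seq_eq_split_val[OF assms(1)] split_val_beyond_diameter[OF assms(2)] by simp

lemma Rvec_Cons_parts:
  assumes hq: "q \<noteq> 0" and w: "w \<in> words (length as)"
    and hT: "\<And>w'. w' \<in> words (length as) \<Longrightarrow> F (True # w') = x w'"
    and hF: "\<And>w'. w' \<in> words (length as) \<Longrightarrow> F (False # w') = y w'"
  shows "Rvec q u v (\<alpha> # as) F (True # w) = Rvec q u v as x w"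
    and "Rvec q u v (\<alpha> # as) F (False # w) = Rvec q u v as y w + Rcoef q u v \<alpha> (length as) (xcount w) * x w"
proof -
  have "Rvec q u v as (\<lambda>w'. F (True # w')) w = Rvec q u v as x w" by (rule Rvec_cong[OF hq hT w])
  moreover have "Rvec q u v as (\<lambda>w'. F (False # w')) w = Rvec q u v as y w" by (rule Rvec_cong[OF hq hF w])
  ultimately show "Rvec q u v (\<alpha> # as) F (True # w) = Rvec q u v as x w"
    and "Rvec q u v (\<alpha> # as) F (False # w) = Rvec q u v as y w + Rcoef q u v \<alpha> (length as) (xcount w) * x w"
    using hT[OF w] by simp_all
qed

lemma Lvec_Cons_parts:
  assumes hq: "q \<noteq> 0" and w: "w \<in> words (length as)"
    and hT: "\<And>w'. w' \<in> words (length as) \<Longrightarrow> F (True # w') = x w'"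
    and hF: "\<And>w'. w' \<in> words (length as) \<Longrightarrow> F (False # w') = y w'"
  shows "Lvec q us vs (\<alpha> # as) F (True # w) = Lvec q us vs as x w + Lcoef q us vs \<alpha> (length as) (xcount w) * y w"
    and "Lvec q us vs (\<alpha> # as) F (False # w) = Lvec q us vs as y w"
proof -
  have "Lvec q us vs as (\<lambda>w'. F (True # w')) w = Lvec q us vs as x w" by (rule Lvec_cong[OF hq hT w])
  moreover have "Lvec q us vs as (\<lambda>w'. F (False # w')) w = Lvec q us vs as y w" by (rule Lvec_cong[OF hq hF w])
  ultimately show "Lvec q us vs (\<alpha> # as) F (True # w) = Lvec q us vs as x w + Lcoef q us vs \<alpha> (length as) (xcount w) * y w"
    and "Lvec q us vs (\<alpha> # as) F (False # w) = Lvec q us vs as y w"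
    using hF[OF w] by simp_all
qed

lemma Rvec_iter_Cons:
  assumes hq: "q \<noteq> 0"
  shows "w \<in> words (length as) \<Longrightarrow>
    (Rvec q u v (\<alpha> # as) ^^ i) (top_vec (Suc (length as))) (True # w) = (Rvec q u v as ^^ i) (top_vec (length as)) w
  \<and> (Rvec q u v (\<alpha> # as) ^^ i) (top_vec (Suc (length as))) (False # w) =
       (\<Sum>j<i. Rcoef q u v \<alpha> (length as) (length as - j)) * (Rvec q u v as ^^ (i - 1)) (top_vec (length as)) w"
proof (induction i arbitrary: w)
  case 0 then show ?case by (simp add: top_vec_def)
next
  case (Suc i)
  define m where "m = length as"
  define r where "r = (\<lambda>k. (Rvec q u v as ^^ k) (top_vec m))"
  define S where "S = (\<Sum>j<i. Rcoef q u v \<alpha> m (m - j))"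
  have IH_T: "(Rvec q u v (\<alpha> # as) ^^ i) (top_vec (Suc m)) (True # w') = r i w'"
    and IH_F: "(Rvec q u v (\<alpha> # as) ^^ i) (top_vec (Suc m)) (False # w') = S * r (i - 1) w'"
    if "w' \<in> words (length as)" for w'
    using Suc.IH[OF that] by (simp_all add: r_def S_def m_def)
  note parts = Rvec_Cons_parts[OF hq Suc.prems IH_T IH_F]
  have weight: "Rcoef q u v \<alpha> m (xcount w) * r i w = Rcoef q u v \<alpha> m (m - i) * r i w"
  proof (cases "r i w = 0")
    case False
    then have "xcount w = m - i"
      using Rvec_iter_top_support[OF Suc.prems] by (force simp: r_def m_def)
    then show ?thesis by simp
  qed simp
  have shift: "Rvec q u v as (\<lambda>w'. S * r (i - 1) w') w = S * r i w"
    using Rvec_scale[OF hq Suc.prems, where c = S and f = "r (i - 1)"]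
    by (cases i) (simp_all add: S_def r_def)
  show ?case using parts weight shift by (simp add: r_def S_def m_def algebra_simps)
qed

lemma Lvec_iter_Cons:
  assumes hq: "q \<noteq> 0"
    and hF: "\<And>w'. w' \<in> words (length as) \<Longrightarrow> F (False # w') = c * z w'"
    and hz: "\<And>w'. w' \<in> words (length as) \<Longrightarrow> z w' \<noteq> 0 \<Longrightarrow> xcount w' = k"
  shows "w \<in> words (length as) \<Longrightarrow>
    (Lvec q us vs (\<alpha> # as) ^^ j) F (False # w) = c * (Lvec q us vs as ^^ j) z w
  \<and> (Lvec q us vs (\<alpha> # as) ^^ j) F (True # w) = (Lvec q us vs as ^^ j) (\<lambda>w'. F (True # w')) w
       + c * (\<Sum>s<j. Lcoef q us vs \<alpha> (length as) (k + s)) * (Lvec q us vs as ^^ (j - 1)) z w"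
proof (induction j arbitrary: w)
  case 0 then show ?case using hF by simp
next
  case (Suc j)
  define m where "m = length as"
  define A where "A = (Lvec q us vs as ^^ j) (\<lambda>w'. F (True # w'))"
  define Z where "Z = (\<lambda>i. (Lvec q us vs as ^^ i) z)"
  define T where "T = (\<Sum>s<j. Lcoef q us vs \<alpha> m (k + s))"
  have IH_T: "(Lvec q us vs (\<alpha> # as) ^^ j) F (True # w') = A w' + c * T * Z (j - 1) w'"
    and IH_F: "(Lvec q us vs (\<alpha> # as) ^^ j) F (False # w') = c * Z j w'"
    if "w' \<in> words (length as)" for w'
    using Suc.IH[OF that] by (simp_all add: A_def Z_def T_def m_def mult.assoc)
  note parts = Lvec_Cons_parts[OF hq Suc.prems IH_T IH_F]
  have weight: "Lcoef q us vs \<alpha> m (xcount w) * Z j w = Lcoef q us vs \<alpha> m (k + j) * Z j w"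
    using Lvec_iter_const_support[OF hz Suc.prems] by (cases "Z j w = 0") (auto simp: Z_def)
  have scale: "Lvec q us vs as (\<lambda>w'. c * Z j w') w = c * Z (Suc j) w"
    using Lvec_scale[OF hq Suc.prems] by (simp add: Z_def)
  have shift: "Lvec q us vs as (\<lambda>w'. A w' + c * T * Z (j - 1) w') w = Lvec q us vs as A w + c * T * Z j w"
    using Lvec_add[OF hq Suc.prems, where f = A and g = "\<lambda>v. c * T * Z (j - 1) v"]
      Lvec_scale[OF hq Suc.prems, where c = "c * T" and f = "Z (j - 1)"]
    by (cases j) (simp_all add: T_def Z_def)
  show ?case using parts weight scale shift by (simp add: A_def Z_def T_def m_def algebra_simps)
qed

lemma split_val_Cons:
  assumes hq: "q \<noteq> 0"
  shows "split_val q u v us vs (\<alpha> # as) i = split_val q u v us vs as i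
    + (\<Sum>j<i. Rcoef q u v \<alpha> (length as) (length as - j))
      * (\<Sum>s<i. Lcoef q us vs \<alpha> (length as) (length as - (i - 1) + s)) * split_val q u v us vs as (i - 1)"
proof -
  define m where "m = length as"
  define F where "F = (Rvec q u v (\<alpha> # as) ^^ i) (top_vec (Suc m))"
  define r where "r = (\<lambda>k. (Rvec q u v as ^^ k) (top_vec m))"
  define S where "S = (\<Sum>j<i. Rcoef q u v \<alpha> m (m - j))"
  define x0 where "x0 = replicate m True"
  have x0w: "x0 \<in> words (length as)" by (simp add: x0_def m_def words_def)
  have hF: "F (False # w') = S * r (i - 1) w'" if "w' \<in> words (length as)" for w'
    using Rvec_iter_Cons[OF hq that, where \<alpha>=\<alpha> and i=i and u=u and v=v] by (simp add: F_def S_def r_def m_def)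
  have hT: "F (True # w') = r i w'" if "w' \<in> words (length as)" for w'
    using Rvec_iter_Cons[OF hq that, where \<alpha>=\<alpha> and i=i and u=u and v=v] by (simp add: F_def r_def m_def)
  have hz: "xcount w' = m - (i - 1)" if "w' \<in> words (length as)" "r (i - 1) w' \<noteq> 0" for w'
    using Rvec_iter_top_support[OF that[unfolded r_def m_def]] by (simp add: m_def)
  have decomp: "(Lvec q us vs (\<alpha> # as) ^^ i) F (True # x0) = (Lvec q us vs as ^^ i) (\<lambda>w'. F (True # w')) x0
       + S * (\<Sum>s<i. Lcoef q us vs \<alpha> (length as) (m - (i - 1) + s)) * (Lvec q us vs as ^^ (i - 1)) (r (i - 1)) x0"
    using Lvec_iter_Cons[where q=q and F=F and c=S and z="r (i - 1)" and k="m - (i - 1)" and as=as and \<alpha>=\<alpha> and j=i and us=us and vs=vs, OF hq hF hz x0w] by simp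
  have top_part: "(Lvec q us vs as ^^ i) (\<lambda>w'. F (True # w')) x0 = (Lvec q us vs as ^^ i) (r i) x0"
    by (rule Lvec_iter_cong[OF hq _ x0w]) (use hT in auto)
  show ?thesis using decomp top_part unfolding split_val_def F_def r_def S_def x0_def m_def by simp
qed

lemma Rcoef_geometric:
  assumes hq: "q \<noteq> 0" and j: "j \<le> m"
  shows "Rcoef q u v \<alpha> m (m - j) = u * \<alpha> * inverse (q ^ Suc m) * (q ^ 2) ^ j + v * q ^ Suc m * (inverse q ^ 2) ^ j"
proof -
  obtain p where m: "m = j + p" using j le_Suc_ex by blast
  show ?thesis unfolding Rcoef_def kdiag_def m using hq
    by (simp add: field_simps power_add power_mult_distrib power2_eq_square)
qed

lemma Lcoef_geometric:
  assumes hq: "q \<noteq> 0" and k: "e + s \<le> m"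
  shows "Lcoef q us vs \<alpha> m (e + s) = us * inverse (q ^ Suc m) * q * (q ^ e) ^ 2 * (q ^ 2) ^ s
      + vs * q ^ Suc m * q * inverse \<alpha> * (inverse (q ^ e)) ^ 2 * (inverse q ^ 2) ^ s"
proof -
  obtain p where m: "m = e + s + p" using k le_Suc_ex by blast
  show ?thesis unfolding Lcoef_def kdiag_def m using hq
    by (simp add: field_simps power_add power_mult_distrib power2_eq_square)
qed

lemma Rcoef_sum_closed:
  assumes hq: "q \<noteq> 0" and i: "i \<le> Suc m"
  shows "(\<Sum>j<i. Rcoef q u v \<alpha> m (m - j)) = u * \<alpha> * inverse (q ^ Suc m) * (\<Sum>j<i. (q^2)^j)
     + v * q ^ Suc m * (\<Sum>j<i. (inverse q^2)^j)"
proof -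
  have "(\<Sum>j<i. Rcoef q u v \<alpha> m (m - j)) = (\<Sum>j<i. u * \<alpha> * inverse (q ^ Suc m) * (q ^ 2) ^ j + v * q ^ Suc m * (inverse q ^ 2) ^ j)"
    by (rule sum.cong) (use Rcoef_geometric[OF hq] i in auto)
  then show ?thesis by (simp add: sum.distrib sum_distrib_left)
qed

lemma Lcoef_sum_closed:
  assumes hq: "q \<noteq> 0" and i1: "1 \<le> i" and i: "i \<le> Suc m"
  shows "(\<Sum>s<i. Lcoef q us vs \<alpha> m (m - (i - 1) + s)) =
     us * inverse (q ^ Suc m) * q * (q ^ (Suc m - i)) ^ 2 * (\<Sum>s<i. (q^2)^s)
     + vs * q ^ Suc m * q * inverse \<alpha> * (inverse (q ^ (Suc m - i))) ^ 2 * (\<Sum>s<i. (inverse q^2)^s)"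
proof -
  have e: "m - (i - 1) = Suc m - i" using i1 i by simp
  have "(\<Sum>s<i. Lcoef q us vs \<alpha> m (m - (i - 1) + s)) = (\<Sum>s<i. us * inverse (q ^ Suc m) * q * (q ^ (Suc m - i)) ^ 2 * (q ^ 2) ^ s
      + vs * q ^ Suc m * q * inverse \<alpha> * (inverse (q ^ (Suc m - i))) ^ 2 * (inverse q ^ 2) ^ s)"
  proof (rule sum.cong)
    fix s assume "s \<in> {..<i}"
    then have "Suc m - i + s \<le> m" using i i1 by auto
    then show "Lcoef q us vs \<alpha> m (m - (i - 1) + s) = us * inverse (q ^ Suc m) * q * (q ^ (Suc m - i)) ^ 2 * (q ^ 2) ^ s
      + vs * q ^ Suc m * q * inverse \<alpha> * (inverse (q ^ (Suc m - i))) ^ 2 * (inverse q ^ 2) ^ s"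
      unfolding e by (rule Lcoef_geometric[OF hq])
  qed simp
  then show ?thesis by (simp add: sum.distrib sum_distrib_left)
qed

text \<open>The field identity behind the recursion, first with all inverses replaced
  by variables with defining equations, so that it becomes a polynomial identity.\<close>

lemma coefficient_identity_poly:
  fixes q A E b bs c cs u v us vs \<alpha> t a e ia w w' z z' :: "'a::field"
  assumes "q*t = 1" "A*a = 1" "E*e=1" "\<alpha>*ia = 1" "(q^2-1)*w = 1" "(t^2-1)*w'=1" "(A-a)^2*z=1" "(q-t)^2*z' = 1"
    and huv: "u * vs = - b * bs * t * (q - t) ^ 2"
    and hvu: "v * us = - c * cs * t * (q - t) ^ 2"
  shows "(u * \<alpha> * (e*a) * ((A^2-1)*w) + v * (E*A) * ((a^2 - 1)*w'))
   * (us * (e*a) * q * E^2 * ((A^2-1)*w) + vs * (E*A) * q * ia * e ^2 * ((a^2 - 1)*w'))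
    * z
   = (E - e) * (b * bs * e - c * cs * E) + (u * t * \<alpha> + v * q) * (us + vs * q * q * ia) * z'"
  using assms by algebra

lemma coefficient_identity:
  fixes q A E b bs c cs u v us vs \<alpha> :: "'a::field"
  assumes hq: "q \<noteq> 0" and hq2: "q ^ 2 \<noteq> 1" and hA: "A \<noteq> 0" and hA1: "A - inverse A \<noteq> 0" and hE: "E \<noteq> 0"
    and ha: "\<alpha> \<noteq> 0"
    and huv: "u * vs = - b * bs * inverse q * (q - inverse q) ^ 2"
    and hvu: "v * us = - c * cs * inverse q * (q - inverse q) ^ 2"
  shows "(u * \<alpha> * inverse (E*A) * ((A^2-1)/(q^2-1)) + v * (E*A) * ((inverse A^2 - 1)/(inverse q^2 - 1)))
   * (us * inverse (E*A) * q * E^2 * ((A^2-1)/(q^2-1)) + vs * (E*A) * q * inverse \<alpha> * inverse E ^2 * ((inverse A^2 - 1)/(inverse q^2 - 1)))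
    / (A - inverse A)^2
   = (E - inverse E) * (b * bs * inverse E - c * cs * E) + (u * inverse q * \<alpha> + v * q) * (us + vs * q * q * inverse \<alpha>) / (q - inverse q)^2"
proof -
  have hq2': "q^2 - 1 \<noteq> 0" using hq2 by simp
  have hqdiff: "q - inverse q \<noteq> 0" using hq hq2' by (metis (no_types, lifting) eq_iff_diff_eq_0 power2_eq_square right_inverse)
  have hiq2: "inverse q^2 - 1 \<noteq> 0" using hq2 hq by (simp add: power_inverse field_simps)
  have "(u * \<alpha> * (inverse E * inverse A) * ((A^2-1)* inverse (q^2-1)) + v * (E*A) * ((inverse A^2 - 1)* inverse (inverse q^2-1)))
   * (us * (inverse E*inverse A) * q * E^2 * ((A^2-1)*inverse (q^2-1)) + vs * (E*A) * q * inverse \<alpha> * inverse E ^2 * ((inverse A^2 - 1)* inverse (inverse q^2-1)))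
    * inverse ((A - inverse A)^2)
   = (E - inverse E) * (b * bs * inverse E - c * cs * E) + (u * inverse q * \<alpha> + v * q) * (us + vs * q * q * inverse \<alpha>) * inverse ((q - inverse q)^2)"
    by (rule coefficient_identity_poly) (use hq hA hE ha hq2' hqdiff hiq2 hA1 huv hvu in auto)
  then show ?thesis by (simp add: divide_inverse inverse_mult_distrib mult.assoc)
qed

lemma norm_split_seq_single: assumes hq: "q \<noteq> 0"
  shows "norm_split_seq q u v us vs [\<alpha>] 1 = (u * inverse q * \<alpha> + v * q) * (us + vs * q * q * inverse \<alpha>) / (q - inverse q)^2"
proof -
  have "split_val q u v us vs [\<alpha>] 1 = split_val q u v us vs [] 1 + (\<Sum>j<1. Rcoef q u v \<alpha> 0 (0 - j)) * (\<Sum>s<1. Lcoef q us vs \<alpha> 0 (0 - (1 - 1) + s)) * split_val q u v us vs [] (1 - 1)"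
    using split_val_Cons[OF hq, where as="[]" and \<alpha>=\<alpha> and i=1] by simp
  also have "\<dots> = (u * inverse q * \<alpha> + v * q) * (us + vs * q * q * inverse \<alpha>)"
    using split_val_beyond_diameter[of "[]" 1] by (simp add: split_val_0 Rcoef_def Lcoef_def kdiag_def)
  finally show ?thesis using norm_split_seq_eq_split_val[OF hq] by simp
qed

lemma feasible_qdiff_nonzero:
  fixes q :: "'a::field"
  assumes hq: "q \<noteq> 0" and feas: "feasible q d" and k: "1 \<le> k" "k \<le> d"
  shows "q ^ k - inverse q ^ k \<noteq> 0"
proof
  assume "q ^ k - inverse q ^ k = 0"
  then have "q ^ k * q ^ k = 1" using hq by (simp add: power_inverse field_simps)
  then have "q ^ (2 * k) = 1" by (simp add: mult_2 power_add)
  moreover have "q ^ (2 * k) \<noteq> 1" using feas k by (auto simp: feasible_def)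
  ultimately show False by simp
qed

lemma coefficient_product:
  fixes q b c bs cs u v us vs \<alpha> :: "'a::field"
  assumes hq: "q \<noteq> 0" and hq2: "q ^ 2 \<noteq> 1" and ha: "\<alpha> \<noteq> 0"
    and huv: "u * vs = - b * bs * inverse q * (q - inverse q) ^ 2"
    and hvu: "v * us = - c * cs * inverse q * (q - inverse q) ^ 2"
    and n1: "1 \<le> n" and nm: "n \<le> Suc m" and hn: "q ^ n - inverse q ^ n \<noteq> 0"
  shows "(\<Sum>j<n. Rcoef q u v \<alpha> m (m - j)) * (\<Sum>s<n. Lcoef q us vs \<alpha> m (m - (n - 1) + s))
      / (q ^ n - inverse q ^ n) ^ 2
    = (q ^ (Suc m - n) - inverse q ^ (Suc m - n)) * (b * bs * inverse q ^ (Suc m - n) - c * cs * q ^ (Suc m - n))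
      + (u * inverse q * \<alpha> + v * q) * (us + vs * q * q * inverse \<alpha>) / (q - inverse q) ^ 2"
proof -
  define A where "A = q ^ n"
  define E where "E = q ^ (Suc m - n)"
  have EA: "q ^ Suc m = E * A" unfolding E_def A_def using nm by (simp flip: power_add)
  have hA: "A \<noteq> 0" and hE: "E \<noteq> 0" using hq by (simp_all add: A_def E_def)
  have hA1: "A - inverse A \<noteq> 0" using hn by (simp add: A_def power_inverse)
  have iq2: "inverse q ^ 2 \<noteq> 1" using hq2 hq by (simp add: power_inverse)
  have G1: "(\<Sum>j<n. (q^2)^j) = (A^2 - 1) / (q^2 - 1)"
    using geometric_sum[OF hq2, of n] by (simp add: A_def flip: power_mult) (simp add: mult.commute)
  have G2: "(\<Sum>j<n. (inverse q^2)^j) = (inverse A^2 - 1) / (inverse q^2 - 1)"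
    using geometric_sum[OF iq2, of n] by (simp add: A_def power_inverse flip: power_mult) (simp add: mult.commute)
  have "(\<Sum>j<n. Rcoef q u v \<alpha> m (m - j)) * (\<Sum>s<n. Lcoef q us vs \<alpha> m (m - (n - 1) + s))
      / (A - inverse A) ^ 2
    = (E - inverse E) * (b * bs * inverse E - c * cs * E)
      + (u * inverse q * \<alpha> + v * q) * (us + vs * q * q * inverse \<alpha>) / (q - inverse q) ^ 2"
    unfolding Rcoef_sum_closed[OF hq nm] Lcoef_sum_closed[OF hq n1 nm] G1 G2 EA E_def[symmetric]
    using coefficient_identity[OF hq hq2 hA hA1 hE ha huv hvu] by (simp add: power_inverse)
  then show ?thesis by (simp add: A_def E_def power_inverse)
qed

lemma norm_split_seq_Cons:
  fixes q b c bs cs u v us vs \<alpha> :: "'a::field" and \<beta>s :: "'a list"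
  assumes hq: "q \<noteq> 0" and hq2: "q ^ 2 \<noteq> 1" and ha: "\<alpha> \<noteq> 0"
    and huv: "u * vs = - b * bs * inverse q * (q - inverse q) ^ 2"
    and hvu: "v * us = - c * cs * inverse q * (q - inverse q) ^ 2"
    and hd: "Suc (length \<beta>s) = d" and feas: "feasible q d"
    and n1: "1 \<le> n" and nd: "n \<le> d"
  shows "norm_split_seq q u v us vs (\<alpha> # \<beta>s) n =
     (q ^ (d - n) - inverse q ^ (d - n)) * (b * bs * inverse q ^ (d - n) - c * cs * q ^ (d - n))
       * norm_split_seq q u v us vs \<beta>s (n - 1)
     + norm_split_seq q u v us vs \<beta>s n
     + norm_split_seq q u v us vs [\<alpha>] 1 * norm_split_seq q u v us vs \<beta>s (n - 1)"
proof -
  define m where "m = length \<beta>s"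
  define P where "P = (\<lambda>i. (\<Prod>k=1..i. (q ^ k - inverse q ^ k) ^ 2))"
  define S where "S = (\<Sum>j<n. Rcoef q u v \<alpha> m (m - j))"
  define T where "T = (\<Sum>s<n. Lcoef q us vs \<alpha> m (m - (n - 1) + s))"
  define \<sigma>W where "\<sigma>W = norm_split_seq q u v us vs \<beta>s"
  have hP: "q ^ k - inverse q ^ k \<noteq> 0" if "1 \<le> k" "k \<le> d" for k
    using feasible_qdiff_nonzero[OF hq feas that] .
  have Pn: "P n = P (n - 1) * (q ^ n - inverse q ^ n) ^ 2"
    unfolding P_def using n1 by (cases n) auto
  have Pnz: "P (n - 1) \<noteq> 0" unfolding P_def using hP nd by auto
  have coef: "S * T / (q ^ n - inverse q ^ n) ^ 2 =
      (q ^ (d - n) - inverse q ^ (d - n)) * (b * bs * inverse q ^ (d - n) - c * cs * q ^ (d - n))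
      + norm_split_seq q u v us vs [\<alpha>] 1"
    unfolding S_def T_def norm_split_seq_single[OF hq]
    using coefficient_product[OF hq hq2 ha huv hvu n1, of m] hP[OF n1 nd] nd hd by (simp add: m_def)
  have "norm_split_seq q u v us vs (\<alpha> # \<beta>s) n
      = (split_val q u v us vs \<beta>s n + S * T * split_val q u v us vs \<beta>s (n - 1)) / P n"
    unfolding norm_split_seq_eq_split_val[OF hq] split_val_Cons[OF hq] S_def T_def m_def P_def ..
  also have "\<dots> = split_val q u v us vs \<beta>s n / P n
      + (S * T / (q ^ n - inverse q ^ n) ^ 2) * (split_val q u v us vs \<beta>s (n - 1) / P (n - 1))"
    unfolding Pn using Pnz hP[OF n1 nd] by (simp add: field_simps)
  also have "\<dots> = \<sigma>W n + (S * T / (q ^ n - inverse q ^ n) ^ 2) * \<sigma>W (n - 1)"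
    unfolding \<sigma>W_def norm_split_seq_eq_split_val[OF hq] P_def ..
  finally show ?thesis unfolding coef \<sigma>W_def by (simp add: algebra_simps)
qed

theorem proposition7p11:
  fixes q b c bs cs u v us vs \<alpha> :: "'a::alg_closed_field"
    and \<beta>s :: "'a list" and d :: nat
  assumes hq: "q \<noteq> 0" and hq2: "q ^ 2 \<noteq> 1"
    and hb: "b \<noteq> 0" and hc: "c \<noteq> 0" and hbs: "bs \<noteq> 0" and hcs: "cs \<noteq> 0"
    and huv: "u * vs = - b * bs * inverse q * (q - inverse q) ^ 2"
    and hvu: "v * us = - c * cs * inverse q * (q - inverse q) ^ 2"
    and hd: "d \<ge> 1" and hfeas: "feasible q d"
    and h\<alpha>: "\<alpha> \<noteq> 0"
    and hlen: "length \<beta>s = d - 1" and h\<beta>: "\<forall>\<beta>\<in>set \<beta>s. \<beta> \<noteq> 0"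
  shows "norm_split_seq q u v us vs (\<alpha> # \<beta>s) 0 = 1
    \<and> (\<forall>n\<in>{1..d-1}.
         norm_split_seq q u v us vs (\<alpha> # \<beta>s) n =
           (q ^ (d - n) - inverse q ^ (d - n)) * (b * bs * inverse q ^ (d - n) - c * cs * q ^ (d - n))
             * norm_split_seq q u v us vs \<beta>s (n - 1)
           + norm_split_seq q u v us vs \<beta>s n
           + norm_split_seq q u v us vs [\<alpha>] 1 * norm_split_seq q u v us vs \<beta>s (n - 1))
    \<and> norm_split_seq q u v us vs (\<alpha> # \<beta>s) d =
        norm_split_seq q u v us vs [\<alpha>] 1 * norm_split_seq q u v us vs \<beta>s (d - 1)"
proof -
  have diam: "Suc (length \<beta>s) = d" using hlen hd by simp
  note recursion = norm_split_seq_Cons[OF hq hq2 h\<alpha> huv hvu diam hfeas]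
  have top: "norm_split_seq q u v us vs \<beta>s d = 0"
    using norm_split_seq_beyond_diameter[OF hq] diam by simp
  show ?thesis
    using norm_split_seq_0[OF hq] recursion[of d] recursion hd top by auto
qed

end
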